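(* There exists an instance of \textsc{MaxMSReco}, i.e., a monotone submodular $f:2^{[n]}\to\mathbb{R}_+$ and $X,Y\in\binom{[n]}{k}$, such that the optimal reconfiguration sequence $\mathcal{S}^*$ from $X$ to $Y$ under token jumping has $f(\mathcal{S}^* )=1$, while every reconfiguration sequence $\mathcal{S}$ from $X$ to $Y$ under token jumping all of whose sets are subsets of $X\cup Y$ has $f(\mathcal{S})\le\frac34$. (In particular the optimal sequence must use elements outside $X\cup Y$.)
   Context: $f$ is submodular if $f(S)+f(T)\ge f(S\cap T)+f(S\cup T)$ and monotone if $f(S)\le f(T)$ for $S\subseteq T$. Two sets are adjacent under token jumping if they have the same size $s$ and intersection of size $s-1$. A reconfiguration sequence from $X$ to $Y$ is a sequence of sets starting at $X$, ending at $Y$, with consecutive sets adjacent; its value is the minimum of $f$ over its sets. \textsc{MaxMSReco} asks for a reconfiguration sequence under token jumping maximizing this value. *)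

theory Defs
  imports Complex_Main
begin

text \<open>Ground set [n] is rendered as {..<n}. Set functions are f :: nat set => real,
 constrained only on subsets of the ground set.\<close>

definition monotone_on_ground :: "nat \<Rightarrow> (nat set \<Rightarrow> real) \<Rightarrow> bool" where
  "monotone_on_ground n f \<longleftrightarrow>
     (\<forall>S T. S \<subseteq> T \<and> T \<subseteq> {..<n} \<longrightarrow> f S \<le> f T)"

definition submodular_on_ground :: "nat \<Rightarrow> (nat set \<Rightarrow> real) \<Rightarrow> bool" where
  "submodular_on_ground n f \<longleftrightarrow>
     (\<forall>S T. S \<subseteq> {..<n} \<and> T \<subseteq> {..<n} \<longrightarrow> f S + f T \<ge> f (S \<inter> T) + f (S \<union> T))"

definition nonneg_on_ground :: "nat \<Rightarrow> (nat set \<Rightarrow> real) \<Rightarrow> bool" where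
  "nonneg_on_ground n f \<longleftrightarrow> (\<forall>S. S \<subseteq> {..<n} \<longrightarrow> f S \<ge> 0)"

definition tj_adjacent :: "nat set \<Rightarrow> nat set \<Rightarrow> bool" where
  "tj_adjacent A B \<longleftrightarrow> card A = card B \<and> card (A \<inter> B) + 1 = card A"

definition reco_seq :: "nat \<Rightarrow> nat set \<Rightarrow> nat set \<Rightarrow> nat set list \<Rightarrow> bool" where
  "reco_seq n X Y S \<longleftrightarrow> S \<noteq> [] \<and> hd S = X \<and> last S = Y \<and>
     (\<forall>A\<in>set S. A \<subseteq> {..<n}) \<and>
     (\<forall>i. Suc i < length S \<longrightarrow> tj_adjacent (S ! i) (S ! Suc i))"

definition seq_value :: "(nat set \<Rightarrow> real) \<Rightarrow> nat set list \<Rightarrow> real" where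
  "seq_value f S = Min (f ` set S)"

end

theory Submission
  imports Defs
begin

text \<open>Take the coverage function of five sets over a four-point universe: elements 0 and 1
  cover complementary pairs, elements 2 and 3 cover "crossing" pairs, and element 4 covers
  everything; normalise by 4. Then X = {0,1} and Y = {2,3} have value 1, whereas every other
  2-subset of X \<union> Y covers only three points. Since X and Y are disjoint pairs, no single
  token jump leads from X to Y, so a sequence inside X \<union> Y must visit such a set and drops
  to 3/4. Passing through element 4 instead, X \<rightarrow> {0,4} \<rightarrow> {2,4} \<rightarrow> Y keeps the value 1.\<close>

definition coverage :: "('a \<Rightarrow> 'b set) \<Rightarrow> 'a set \<Rightarrow> nat" where
  "coverage C S = card (\<Union>(C ` S))"

lemma coverage_mono:
  assumes "finite (\<Union>(C ` T))" and "S \<subseteq> T"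
  shows "coverage C S \<le> coverage C T"
  unfolding coverage_def using assms by (intro card_mono) auto

lemma coverage_submodular:
  assumes "finite (\<Union>(C ` S))" and "finite (\<Union>(C ` T))"
  shows "coverage C (S \<inter> T) + coverage C (S \<union> T) \<le> coverage C S + coverage C T"
proof -
  have "card (\<Union>(C ` (S \<inter> T))) \<le> card (\<Union>(C ` S) \<inter> \<Union>(C ` T))"
    using assms by (intro card_mono) auto
  moreover have "card (\<Union>(C ` S) \<union> \<Union>(C ` T)) + card (\<Union>(C ` S) \<inter> \<Union>(C ` T))
      = card (\<Union>(C ` S)) + card (\<Union>(C ` T))"
    using assms by (rule card_Un_Int[symmetric])
  ultimately show ?thesis
    unfolding coverage_def by (simp add: image_Un)
qed

lemma exists_step_leaving:
  assumes "xs \<noteq> []" and "hd xs \<in> A" and "last xs \<notin> A"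
  shows "\<exists>i. Suc i < length xs \<and> xs ! i \<in> A \<and> xs ! Suc i \<notin> A"
  using assms
proof (induction xs)
  case Nil
  then show ?case by simp
next
  case (Cons x xs)
  have "xs \<noteq> []"
    using Cons.prems by auto
  show ?case
  proof (cases "hd xs \<in> A")
    case False
    with \<open>xs \<noteq> []\<close> Cons.prems show ?thesis by (auto simp: hd_conv_nth intro: exI[of _ 0])
  next
    case True
    with \<open>xs \<noteq> []\<close> Cons.prems Cons.IH
    obtain i where "Suc i < length xs \<and> xs ! i \<in> A \<and> xs ! Suc i \<notin> A"
      by auto
    then show ?thesis by (intro exI[of _ "Suc i"]) auto
  qed
qed

lemma reco_seq_card:
  assumes "reco_seq n X Y S" and "i < length S"
  shows "card (S ! i) = card X"
  using assms(2)
proof (induction i)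
  case 0
  with assms(1) show ?case by (auto simp: reco_seq_def hd_conv_nth)
next
  case (Suc i)
  with assms(1) have "tj_adjacent (S ! i) (S ! Suc i)" by (auto simp: reco_seq_def)
  with Suc show ?case by (auto simp: tj_adjacent_def)
qed

lemma reco_seq_visits_intermediate:
  assumes "reco_seq n X Y S" and "X \<inter> Y = {}" and "card X \<ge> 2"
  obtains A where "A \<in> set S" and "A \<noteq> X" and "A \<noteq> Y"
proof (rule ccontr)
  assume "\<not> thesis"
  with that have only_ends: "set S \<subseteq> {X, Y}" by blast
  from assms have "X \<noteq> Y" by auto
  with assms(1) obtain i where i: "Suc i < length S" "S ! i \<in> {X}" "S ! Suc i \<notin> {X}"
    using exists_step_leaving[of S "{X}"] unfolding reco_seq_def by auto
  with only_ends have "S ! i = X" "S ! Suc i = Y" by (auto dest!: nth_mem)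
  moreover from assms(1) i(1) have "tj_adjacent (S ! i) (S ! Suc i)"
    by (simp add: reco_seq_def)
  ultimately show False using assms(2,3) by (simp add: tj_adjacent_def)
qed

lemma seq_value_le:
  assumes "A \<in> set S"
  shows "seq_value f S \<le> f A"
  using assms by (simp add: seq_value_def)

definition cover :: "nat \<Rightarrow> nat set" where
  "cover i = (if i = 0 then {0,1} else if i = 1 then {2,3} else if i = 2 then {0,2}
              else if i = 3 then {1,3} else {0,1,2,3})"

definition f_example :: "nat set \<Rightarrow> real" where
  "f_example S = real (coverage cover S) / 4"

lemma cover_subset_universe: "\<Union>(cover ` S) \<subseteq> {0,1,2,3}"
  by (auto simp: cover_def)

lemma finite_cover: "finite (\<Union>(cover ` S))"
  using cover_subset_universe by (rule finite_subset) simp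

lemma f_example_le_1: "f_example S \<le> 1"
proof -
  have "coverage cover S \<le> card {0::nat,1,2,3}"
    unfolding coverage_def using cover_subset_universe by (intro card_mono) auto
  then show ?thesis by (simp add: f_example_def)
qed

lemma f_example_mono: "S \<subseteq> T \<Longrightarrow> f_example S \<le> f_example T"
  using coverage_mono[OF finite_cover] by (simp add: f_example_def)

lemma f_example_submodular:
  "f_example (S \<inter> T) + f_example (S \<union> T) \<le> f_example S + f_example T"
proof -
  have "real (coverage cover (S \<inter> T)) + real (coverage cover (S \<union> T))
      \<le> real (coverage cover S) + real (coverage cover T)"
    using of_nat_mono[OF coverage_submodular[OF finite_cover finite_cover]] by simp
  then show ?thesis by (simp add: f_example_def)
qed

lemma f_example_other_pairs:
  assumes "A \<subseteq> {0,1,2,3}" and "card A = 2" and "A \<noteq> {0,1}" and "A \<noteq> {2,3}"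
  shows "f_example A = 3/4"
proof -
  obtain x y where xy: "A = {x, y}" "x < y"
    using assms(2) by (auto simp: card_2_iff) (metis insert_commute linorder_neqE_nat)
  with assms(1) have "x \<in> {0,1,2,3}" "y \<in> {0,1,2,3}" by auto
  with xy assms(3,4) have "A \<in> {{0,2}, {0,3}, {1,2}, {1,3}}" by auto
  then show ?thesis
    by (elim insertE emptyE) (simp_all add: f_example_def coverage_def cover_def insert_commute)
qed

lemma reco_seq_via_element_4: "reco_seq 5 {0,1} {2,3} [{0,1}, {0,4}, {2,4}, {2,3}]"
proof -
  have "i < 3 \<Longrightarrow> tj_adjacent ([{0,1}, {0,4}, {2,4}, {2,3::nat}] ! i)
                                 ([{0,1}, {0,4}, {2,4}, {2,3}] ! Suc i)" for i
  proof -
    assume "i < 3"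
    then consider "i = 0" | "i = 1" | "i = 2" by linarith
    then show ?thesis by cases (auto simp: tj_adjacent_def insert_commute)
  qed
  then show ?thesis by (auto simp: reco_seq_def)
qed

theorem mainTheorem9:
  shows "\<exists>(n::nat) (k::nat) (f::nat set \<Rightarrow> real) X Y.
     nonneg_on_ground n f \<and> monotone_on_ground n f \<and> submodular_on_ground n f \<and>
     X \<subseteq> {..<n} \<and> Y \<subseteq> {..<n} \<and> card X = k \<and> card Y = k \<and>
     (\<exists>S. reco_seq n X Y S \<and> seq_value f S = 1) \<and>
     (\<forall>S. reco_seq n X Y S \<longrightarrow> seq_value f S \<le> 1) \<and>
     (\<forall>S. reco_seq n X Y S \<and> (\<forall>A\<in>set S. A \<subseteq> X \<union> Y) \<longrightarrow> seq_value f S \<le> 3/4)"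
proof (intro exI conjI allI impI)
  show "nonneg_on_ground 5 f_example" by (simp add: nonneg_on_ground_def f_example_def)
  show "monotone_on_ground 5 f_example" by (simp add: monotone_on_ground_def f_example_mono)
  show "submodular_on_ground 5 f_example"
    using f_example_submodular by (simp add: submodular_on_ground_def add.commute)
  show "{0,1::nat} \<subseteq> {..<5}" "{2,3::nat} \<subseteq> {..<5}" "card {0,1::nat} = 2" "card {2,3::nat} = 2"
    by auto
  show "reco_seq 5 {0,1} {2,3} [{0,1}, {0,4}, {2,4}, {2,3}]" by (rule reco_seq_via_element_4)
  show "seq_value f_example [{0,1}, {0,4}, {2,4}, {2,3}] = 1"
    by (simp add: seq_value_def f_example_def coverage_def cover_def insert_commute)
next
  fix S assume "reco_seq 5 {0,1} {2,3} S"
  then have "hd S \<in> set S" unfolding reco_seq_def using hd_in_set by blast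
  then show "seq_value f_example S \<le> 1"
    using seq_value_le f_example_le_1 order_trans by blast
next
  fix S assume S: "reco_seq 5 {0,1} {2,3} S \<and> (\<forall>A\<in>set S. A \<subseteq> {0,1} \<union> {2,3})"
  then obtain A where A: "A \<in> set S" "A \<noteq> {0,1}" "A \<noteq> {2,3}"
    using reco_seq_visits_intermediate[of 5 "{0,1}" "{2,3}" S] by auto
  then obtain i where "i < length S" "A = S ! i" by (auto simp: in_set_conv_nth)
  with S have "card A = 2" using reco_seq_card by fastforce
  with S A have "f_example A = 3/4" by (intro f_example_other_pairs) auto
  with A(1) show "seq_value f_example S \<le> 3/4" using seq_value_le by metis
qed

end
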